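(* Let $p>1$ and $b\in\{2,3,\dots\}$. (a) There exists a centered Gaussian process $Y=(Y(t))_{t\in[0,1]}$ such that $\mathbb P$-a.s. $\langle Y\rangle^{(p)}_t=V\,t$ for all $t\in[0,1]$ with a random variable $0<V<\infty$, and such that for every $s\in(0,1)$ the function $t\mapsto c(s,t):=\mathbb E[Y(s)Y(t)]$ satisfies $\langle c(s,\cdot)\rangle^{(p)}_t=C_s t$ for all $t\in[0,1]$ with a constant $C_s\in(0,\infty)$. (b) Let $Y=(Y(t))_{t\in[0,1]}$ be any centered Gaussian process whose sample paths $\mathbb P$-a.s. have finite $p$-th variation $\langle Y\rangle^{(p)}_1<\infty$ along the $b$-adic partitions. Then for every $s\in[0,1]$, with $c(s,t):=\mathbb E[Y(s)Y(t)]$, $$\limsup_{n\to\infty}\sum_{k=0}^{b^n-1}\big|c(s,(k+1)b^{-n})-c(s,kb^{-n})\big|^p<\infty.$$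
   Context: For $f:[0,1]\to\mathbb R$ and $p>0$, the $p$-th variation along the $b$-adic partitions is $\langle f\rangle^{(p)}_t:=\lim_{n\to\infty}\sum_{k=0}^{\lfloor tb^n\rfloor-1}|f((k+1)b^{-n})-f(kb^{-n})|^p$, $t\in[0,1]$, provided the limit exists. *)

theory Defs
  imports "HOL-Probability.Probability"
begin

definition badic_pvar_sum :: "nat \<Rightarrow> real \<Rightarrow> (real \<Rightarrow> real) \<Rightarrow> real \<Rightarrow> nat \<Rightarrow> real" where
  "badic_pvar_sum b p f t n =
     (\<Sum>k<nat \<lfloor>t * real b ^ n\<rfloor>. \<bar>f (real (Suc k) / real b ^ n) - f (real k / real b ^ n)\<bar> powr p)"

definition has_badic_pvar :: "nat \<Rightarrow> real \<Rightarrow> (real \<Rightarrow> real) \<Rightarrow> real \<Rightarrow> real \<Rightarrow> bool" where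
  "has_badic_pvar b p f t v \<longleftrightarrow> (badic_pvar_sum b p f t \<longlonglongrightarrow> v)"

definition centered_gaussian_rv :: "'a measure \<Rightarrow> ('a \<Rightarrow> real) \<Rightarrow> bool" where
  "centered_gaussian_rv M X \<longleftrightarrow> X \<in> borel_measurable M \<and>
     (\<exists>\<sigma>\<ge>0. distr M borel X =
        (if \<sigma> = 0 then return borel 0 else density lborel (normal_density 0 \<sigma>)))"

definition centered_gaussian_process :: "'a measure \<Rightarrow> real set \<Rightarrow> (real \<Rightarrow> 'a \<Rightarrow> real) \<Rightarrow> bool" where
  "centered_gaussian_process M I Y \<longleftrightarrow>
     (\<forall>t\<in>I. Y t \<in> borel_measurable M) \<and>
     (\<forall>F a. finite F \<longrightarrow> F \<subseteq> I \<longrightarrow>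
        centered_gaussian_rv M (\<lambda>\<omega>. \<Sum>t\<in>F. a t * Y t \<omega>))"

end

theory Submission
  imports Defs
begin

text \<open>
  (a) Let \<open>Y(t) = \<xi> f(t)\<close> with \<open>\<xi>\<close> standard normal and \<open>f\<close> the Takagi-type function
  \<open>f(x) = 1 + \<Sum>_m b^(-m/p) \<phi>(b^m x mod 1)\<close>, where \<open>\<phi>\<close> is a tent of width \<open>2/b\<close>. Over the
  \<open>k\<close>-th \<open>b\<close>-adic interval of level \<open>n\<close>, \<open>f\<close> increases by \<open>b^(-(n-1)/p) X_n(k)\<close> with
  \<open>X_n(k) = \<Sum>_{j<n} \<beta>^j \<sigma>(k_j)\<close>, where \<open>k_j\<close> are the \<open>b\<close>-adic digits of \<open>k\<close> and
  \<open>\<beta> = b^(1/p - 1) < 1\<close>. So the \<open>p\<close>-th variation sums of \<open>f\<close> up to \<open>t\<close> are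
  \<open>b^(1-n) \<Sum>_{k < t b^n} |X_n(k)|^p\<close>. Up to an error \<open>O(\<beta>^J)\<close>, \<open>X_n(k)\<close> only depends on
  \<open>k mod b^J\<close>, and therefore these sums converge to \<open>t L\<close>, where \<open>L \<ge> 1\<close> is the limit of the
  normalised sums over one period. The paths of \<open>Y\<close> then have variation \<open>|\<xi>|^p L t\<close>, and
  \<open>c(s,\<cdot>) = f(s) f\<close> has variation \<open>|f(s)|^p L t\<close>.

  (b) If the \<open>p\<close>-th variation sums \<open>T_n\<close> of the paths converge almost surely, some \<open>R\<close> bounds
  all of them with probability at least \<open>1/2\<close>. Test the covariance increments
  \<open>D_k = E[Y(s) \<Delta>_k Y]\<close> against the vector \<open>a\<close> dual to \<open>D\<close> in \<open>\<ell>^q\<close>: by Young's inequality the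
  centered Gaussian variable \<open>Z = \<Sum>_k a_k \<Delta>_k Y\<close> satisfies \<open>|Z| \<le> 1 + T_n\<close>, so
  \<open>P(|Z| \<le> 1 + R) \<ge> 1/2\<close>, which forces \<open>E Z^2 \<le> 4(1 + R)^2\<close>. Hence
  \<open>\<parallel>D\<parallel>_p = E[Y(s) Z] \<le> (E Y(s)^2 + 4(1 + R)^2)/2\<close>, uniformly in \<open>n\<close>.
\<close>

section \<open>Second moments of centered Gaussian variables\<close>

lemma normal_density_le_half_inverse:
  assumes "\<sigma> > 0"
  shows "normal_density 0 \<sigma> x \<le> 1 / (2 * \<sigma>)"
proof -
  have "2 \<le> sqrt (2 * pi)" using pi_gt3 by (simp add: real_le_rsqrt)
  then have "2 * \<sigma> \<le> sqrt (2 * pi * \<sigma>\<^sup>2)" using assms by (simp add: real_sqrt_mult)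
  have "normal_density 0 \<sigma> x \<le> 1 / sqrt (2 * pi * \<sigma>\<^sup>2) * 1"
    unfolding normal_density_def by (rule mult_left_mono) auto
  also have "\<dots> \<le> 1 / (2 * \<sigma>)"
    using \<open>2 * \<sigma> \<le> sqrt (2 * pi * \<sigma>\<^sup>2)\<close> assms by (simp add: frac_le)
  finally show ?thesis .
qed

lemma normal_measure_interval_le:
  assumes "\<sigma> > 0" and "r \<ge> 0"
  shows "measure (density lborel (normal_density 0 \<sigma>)) {-r..r} \<le> r / \<sigma>"
proof -
  have "emeasure (density lborel (normal_density 0 \<sigma>)) {-r..r}
        = (\<integral>\<^sup>+x. ennreal (normal_density 0 \<sigma> x) * indicator {-r..r} x \<partial>lborel)"
    by (subst emeasure_density) auto
  also have "\<dots> \<le> (\<integral>\<^sup>+x. ennreal (1 / (2 * \<sigma>)) * indicator {-r..r} x \<partial>lborel)"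
    using normal_density_le_half_inverse[OF assms(1)]
    by (intro nn_integral_mono) (auto intro: ennreal_leI split: split_indicator)
  also have "\<dots> = ennreal (1 / (2 * \<sigma>)) * ennreal (2 * r)"
    using assms by (subst nn_integral_cmult_indicator) auto
  also have "\<dots> = ennreal (r / \<sigma>)" using assms by (simp flip: ennreal_mult)
  finally show ?thesis using assms by (simp add: measure_def enn2real_leI)
qed

lemma centered_gaussian_rv_second_moment:
  assumes "centered_gaussian_rv M X"
  obtains \<sigma> where "\<sigma> \<ge> 0" and "integrable M (\<lambda>\<omega>. (X \<omega>)\<^sup>2)" and "(\<integral>\<omega>. (X \<omega>)\<^sup>2 \<partial>M) = \<sigma>\<^sup>2"
    and "\<And>r. \<sigma> > 0 \<Longrightarrow> r \<ge> 0 \<Longrightarrow> measure M {\<omega>\<in>space M. \<bar>X \<omega>\<bar> \<le> r} \<le> r / \<sigma>"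
proof -
  from assms obtain \<sigma> where [measurable]: "X \<in> borel_measurable M" and "\<sigma> \<ge> 0" and
    D: "distr M borel X = (if \<sigma> = 0 then return borel 0 else density lborel (normal_density 0 \<sigma>))"
    unfolding centered_gaussian_rv_def by blast
  have integrable: "integrable M (\<lambda>\<omega>. (X \<omega>)\<^sup>2) \<longleftrightarrow> integrable (distr M borel X) (\<lambda>x. x\<^sup>2)"
    by (subst integrable_distr_eq) auto
  have integral: "(\<integral>\<omega>. (X \<omega>)\<^sup>2 \<partial>M) = (\<integral>x. x\<^sup>2 \<partial>distr M borel X)"
    by (subst integral_distr) auto
  show ?thesis
  proof (cases "\<sigma> = 0")
    case True
    then have D: "distr M borel X = return borel 0" using D by simp
    have "AE x in distr M borel X. x = 0" unfolding D by (subst AE_return) auto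
    then have "AE \<omega> in M. (X \<omega>)\<^sup>2 = 0" by (subst (asm) AE_distr_iff) auto
    then have "integrable M (\<lambda>\<omega>. (X \<omega>)\<^sup>2)" and "(\<integral>\<omega>. (X \<omega>)\<^sup>2 \<partial>M) = 0"
      by (auto intro: integrable_cong_AE_imp[where g="\<lambda>_. 0"] simp: integral_eq_zero_AE)
    then show ?thesis by (intro that[of 0]) auto
  next
    case False
    then have \<sigma>: "\<sigma> > 0" using \<open>\<sigma> \<ge> 0\<close> by simp
    then have D: "distr M borel X = density lborel (normal_density 0 \<sigma>)" using D by simp
    have "integrable M (\<lambda>\<omega>. (X \<omega>)\<^sup>2)"
      unfolding integrable D using integrable_normal_moment[OF \<sigma>, of 0 2]
      by (subst integrable_density) auto
    moreover have "(\<integral>\<omega>. (X \<omega>)\<^sup>2 \<partial>M) = \<sigma>\<^sup>2"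
      unfolding integral D using integral_normal_moment_even[OF \<sigma>, of 0 1]
      by (subst integral_density) (auto simp: power2_eq_square)
    moreover have "measure M {\<omega>\<in>space M. \<bar>X \<omega>\<bar> \<le> r} \<le> r / \<sigma>" if "r \<ge> 0" for r
    proof -
      have "measure M {\<omega>\<in>space M. \<bar>X \<omega>\<bar> \<le> r} = measure (distr M borel X) {-r..r}"
        by (subst measure_distr) (auto intro!: arg_cong[where f="measure M"])
      then show ?thesis using normal_measure_interval_le[OF \<sigma> that] D by simp
    qed
    ultimately show ?thesis using that \<open>\<sigma> \<ge> 0\<close> by blast
  qed
qed

lemma centered_gaussian_rv_integrable_square:
  "centered_gaussian_rv M X \<Longrightarrow> integrable M (\<lambda>\<omega>. (X \<omega>)\<^sup>2)"
  by (erule centered_gaussian_rv_second_moment) auto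

lemma centered_gaussian_rv_second_moment_le:
  assumes "centered_gaussian_rv M X" and "r \<ge> 0"
    and "measure M {\<omega>\<in>space M. \<bar>X \<omega>\<bar> \<le> r} \<ge> 1/2"
  shows "(\<integral>\<omega>. (X \<omega>)\<^sup>2 \<partial>M) \<le> 4 * r\<^sup>2"
proof -
  obtain \<sigma> where "\<sigma> \<ge> 0" and "integrable M (\<lambda>\<omega>. (X \<omega>)\<^sup>2)" and "(\<integral>\<omega>. (X \<omega>)\<^sup>2 \<partial>M) = \<sigma>\<^sup>2"
    and small_ball: "\<And>r. \<sigma> > 0 \<Longrightarrow> r \<ge> 0 \<Longrightarrow> measure M {\<omega>\<in>space M. \<bar>X \<omega>\<bar> \<le> r} \<le> r / \<sigma>"
    using centered_gaussian_rv_second_moment[OF assms(1)] by metis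
  moreover have "\<sigma> \<le> 2 * r"
  proof (cases "\<sigma> = 0")
    case False
    then have "\<sigma> > 0" using \<open>\<sigma> \<ge> 0\<close> by simp
    then have "1/2 \<le> r / \<sigma>" using small_ball[of r] assms(2,3) by linarith
    then show ?thesis using False \<open>\<sigma> \<ge> 0\<close> by (simp add: field_simps)
  qed (use assms in simp)
  then have "\<sigma>\<^sup>2 \<le> (2 * r)\<^sup>2" using \<open>\<sigma> \<ge> 0\<close> by (intro power_mono)
  moreover have "(2 * r)\<^sup>2 = 4 * r\<^sup>2" by (simp add: power_mult_distrib)
  ultimately show ?thesis by linarith
qed

lemma integrable_mult_of_square_integrable:
  fixes f g :: "'a \<Rightarrow> real"
  assumes "integrable M (\<lambda>\<omega>. (f \<omega>)\<^sup>2)" "integrable M (\<lambda>\<omega>. (g \<omega>)\<^sup>2)"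
    "f \<in> borel_measurable M" "g \<in> borel_measurable M"
  shows "integrable M (\<lambda>\<omega>. f \<omega> * g \<omega>)"
proof (rule Bochner_Integration.integrable_bound[where f="\<lambda>\<omega>. (f \<omega>)\<^sup>2 + (g \<omega>)\<^sup>2"])
  have "\<bar>f \<omega>\<bar> * \<bar>g \<omega>\<bar> \<le> (f \<omega>)\<^sup>2 + (g \<omega>)\<^sup>2" for \<omega>
    using zero_le_power2[of "\<bar>f \<omega>\<bar> - \<bar>g \<omega>\<bar>"] mult_nonneg_nonneg[OF abs_ge_zero abs_ge_zero, of "f \<omega>" "g \<omega>"]
    unfolding power2_diff power2_abs by linarith
  then show "AE \<omega> in M. norm (f \<omega> * g \<omega>) \<le> norm ((f \<omega>)\<^sup>2 + (g \<omega>)\<^sup>2)"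
    by (simp add: abs_mult)
qed (use assms in auto)

lemma integral_mult_le_half_squares:
  fixes f g :: "'a \<Rightarrow> real"
  assumes "integrable M (\<lambda>\<omega>. (f \<omega>)\<^sup>2)" "integrable M (\<lambda>\<omega>. (g \<omega>)\<^sup>2)"
    "f \<in> borel_measurable M" "g \<in> borel_measurable M"
  shows "(\<integral>\<omega>. f \<omega> * g \<omega> \<partial>M) \<le> ((\<integral>\<omega>. (f \<omega>)\<^sup>2 \<partial>M) + (\<integral>\<omega>. (g \<omega>)\<^sup>2 \<partial>M)) / 2"
proof -
  have "(\<integral>\<omega>. f \<omega> * g \<omega> \<partial>M) \<le> (\<integral>\<omega>. ((f \<omega>)\<^sup>2 + (g \<omega>)\<^sup>2) / 2 \<partial>M)"
  proof (rule integral_mono)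
    show "f \<omega> * g \<omega> \<le> ((f \<omega>)\<^sup>2 + (g \<omega>)\<^sup>2) / 2" for \<omega>
      using zero_le_power2[of "f \<omega> - g \<omega>"] by (simp add: power2_diff)
  qed (use integrable_mult_of_square_integrable[OF assms] assms in auto)
  then show ?thesis using assms by simp
qed

section \<open>Covariance increments of a Gaussian process\<close>

lemma centered_gaussian_process_rv:
  assumes "centered_gaussian_process M I Y" and "t \<in> I"
  shows "centered_gaussian_rv M (Y t)"
proof -
  have "\<forall>F a. finite F \<longrightarrow> F \<subseteq> I \<longrightarrow> centered_gaussian_rv M (\<lambda>\<omega>. \<Sum>s\<in>F. a s * Y s \<omega>)"
    using assms(1) unfolding centered_gaussian_process_def by (rule conjunct2)
  from this[rule_format, of "{t}" "\<lambda>_. 1"] show ?thesis using assms(2) by simp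
qed

lemma centered_gaussian_process_linear_comb:
  assumes "centered_gaussian_process M I Y" and "finite J" and "\<tau> ` J \<subseteq> I"
  shows "centered_gaussian_rv M (\<lambda>\<omega>. \<Sum>i\<in>J. c i * Y (\<tau> i) \<omega>)"
proof -
  define a where "a t = (\<Sum>i\<in>{i\<in>J. \<tau> i = t}. c i)" for t
  have "(\<Sum>i\<in>J. c i * Y (\<tau> i) \<omega>) = (\<Sum>t\<in>\<tau> ` J. a t * Y t \<omega>)" for \<omega>
    unfolding a_def sum_distrib_right using \<open>finite J\<close>
    by (subst sum.image_gen[of J]) (auto intro!: sum.cong)
  then show ?thesis using assms unfolding centered_gaussian_process_def by simp
qed

lemma centered_gaussian_process_increment_comb:
  assumes "centered_gaussian_process M I Y" and "finite J"
    and "\<tau>\<^sub>1 ` J \<subseteq> I" and "\<tau>\<^sub>2 ` J \<subseteq> I"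
  shows "centered_gaussian_rv M (\<lambda>\<omega>. \<Sum>i\<in>J. c i * (Y (\<tau>\<^sub>1 i) \<omega> - Y (\<tau>\<^sub>2 i) \<omega>))"
proof -
  have "(\<Sum>i\<in>J. c i * (Y (\<tau>\<^sub>1 i) \<omega> - Y (\<tau>\<^sub>2 i) \<omega>))
      = (\<Sum>i\<in>J <+> J. case_sum c (\<lambda>i. - c i) i * Y (case_sum \<tau>\<^sub>1 \<tau>\<^sub>2 i) \<omega>)" for \<omega>
    using \<open>finite J\<close> by (simp add: sum.Plus right_diff_distrib sum_subtractf sum_negf)
  moreover have "centered_gaussian_rv M
      (\<lambda>\<omega>. \<Sum>i\<in>J <+> J. case_sum c (\<lambda>i. - c i) i * Y (case_sum \<tau>\<^sub>1 \<tau>\<^sub>2 i) \<omega>)"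
    using assms by (intro centered_gaussian_process_linear_comb) auto
  ultimately show ?thesis by simp
qed

lemma Youngs_inequality_conjugate:
  fixes x y :: real
  assumes "p > 1"
  shows "\<bar>x * y\<bar> \<le> \<bar>x\<bar> powr (p / (p - 1)) + \<bar>y\<bar> powr p"
proof -
  define q where "q = p / (p - 1)"
  have q: "q > 1" "1/p + 1/q = 1" using assms unfolding q_def by (auto simp: field_simps)
  have "\<bar>x * y\<bar> \<le> \<bar>x\<bar> powr q / q + \<bar>y\<bar> powr p / p"
    using Youngs_inequality[OF q(1) assms _ abs_ge_zero abs_ge_zero] q(2) by (simp add: abs_mult add.commute)
  also have "\<dots> \<le> \<bar>x\<bar> powr q + \<bar>y\<bar> powr p"
    using q(1) assms by (intro add_mono) (simp_all add: divide_le_eq mult_le_cancel_left1)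
  finally show ?thesis by (simp add: q_def)
qed

lemma lp_norm_dual_witness:
  fixes D :: "'i \<Rightarrow> real"
  assumes p: "p > 1"
  obtains a where "(\<Sum>k\<in>I. a k * D k) = (\<Sum>k\<in>I. \<bar>D k\<bar> powr p) powr (1/p)"
    and "\<And>x. \<bar>\<Sum>k\<in>I. a k * x k\<bar> \<le> 1 + (\<Sum>k\<in>I. \<bar>x k\<bar> powr p)"
proof (cases "(\<Sum>k\<in>I. \<bar>D k\<bar> powr p) = 0")
  case True
  then show ?thesis by (intro that[of "\<lambda>_. 0"]) (simp_all add: sum_nonneg)
next
  case False
  define Q where "Q = (\<Sum>k\<in>I. \<bar>D k\<bar> powr p)"
  define r where "r = Q powr (1/p)"
  define a where "a k = sgn (D k) * (\<bar>D k\<bar> / r) powr (p - 1)" for k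
  have "Q \<ge> 0" unfolding Q_def by (simp add: sum_nonneg)
  then have Q: "Q > 0" using False unfolding Q_def by simp
  have r: "r > 0" "r powr p = Q" using Q p unfolding r_def by (simp_all add: powr_powr)
  have scaled: "(\<bar>D k\<bar> / r) powr p = \<bar>D k\<bar> powr p / Q" for k
    using r by (simp add: powr_divide)
  have times_self: "x powr (p - 1) * x = x powr p" if "x \<ge> 0" for x :: real
    using powr_add[of x "p - 1" 1] that by simp
  have "a k * D k = r * (\<bar>D k\<bar> powr p / Q)" for k
  proof -
    have "a k * D k = r * ((\<bar>D k\<bar> / r) powr (p - 1) * (\<bar>D k\<bar> / r))"
      unfolding a_def using r by (simp add: abs_sgn mult_ac flip: abs_mult_sgn)
    also have "(\<bar>D k\<bar> / r) powr (p - 1) * (\<bar>D k\<bar> / r) = (\<bar>D k\<bar> / r) powr p"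
      using r by (intro times_self) simp
    finally show ?thesis by (simp add: scaled)
  qed
  then have dual: "(\<Sum>k\<in>I. a k * D k) = Q powr (1/p)"
    using Q by (simp add: r_def flip: sum_distrib_left sum_divide_distrib Q_def)
  have young: "\<bar>a k * x k\<bar> \<le> \<bar>D k\<bar> powr p / Q + \<bar>x k\<bar> powr p" for x k
  proof -
    have "\<bar>a k\<bar> powr (p / (p - 1)) = \<bar>D k\<bar> powr p / Q"
      using p unfolding a_def by (simp add: abs_mult powr_powr scaled)
    then show ?thesis using Youngs_inequality_conjugate[OF p, of "a k" "x k"] by simp
  qed
  have "\<bar>\<Sum>k\<in>I. a k * x k\<bar> \<le> 1 + (\<Sum>k\<in>I. \<bar>x k\<bar> powr p)" for x
  proof -
    have "\<bar>\<Sum>k\<in>I. a k * x k\<bar> \<le> (\<Sum>k\<in>I. \<bar>D k\<bar> powr p / Q + \<bar>x k\<bar> powr p)"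
      using young by (intro order_trans[OF sum_abs] sum_mono)
    also have "\<dots> = 1 + (\<Sum>k\<in>I. \<bar>x k\<bar> powr p)"
      using Q by (simp add: sum.distrib Q_def flip: sum_divide_distrib)
    finally show ?thesis .
  qed
  with dual show ?thesis using that Q_def by blast
qed

lemma covariance_increment_comb:
  fixes Y :: "real \<Rightarrow> 'a \<Rightarrow> real" and u :: "nat \<Rightarrow> real"
  assumes G: "centered_gaussian_process M I Y" and s: "s \<in> I" and u: "\<And>k. k \<le> N \<Longrightarrow> u k \<in> I"
  shows "(\<integral>\<omega>. Y s \<omega> * (\<Sum>k<N. a k * (Y (u (Suc k)) \<omega> - Y (u k) \<omega>)) \<partial>M)
    = (\<Sum>k<N. a k * ((\<integral>\<omega>. Y s \<omega> * Y (u (Suc k)) \<omega> \<partial>M) - (\<integral>\<omega>. Y s \<omega> * Y (u k) \<omega> \<partial>M)))"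
proof -
  have Y: "Y t \<in> borel_measurable M" "integrable M (\<lambda>\<omega>. (Y t \<omega>)\<^sup>2)" if "t \<in> I" for t
    using centered_gaussian_process_rv[OF G that]
    by (auto simp: centered_gaussian_rv_def centered_gaussian_rv_integrable_square)
  have cov: "integrable M (\<lambda>\<omega>. Y s \<omega> * Y t \<omega>)" if "t \<in> I" for t
    using Y[OF s] Y[OF that] by (intro integrable_mult_of_square_integrable) auto
  have "integrable M (\<lambda>\<omega>. Y s \<omega> * (Y (u (Suc k)) \<omega> - Y (u k) \<omega>))"
    and "(\<integral>\<omega>. Y s \<omega> * (Y (u (Suc k)) \<omega> - Y (u k) \<omega>) \<partial>M)
      = (\<integral>\<omega>. Y s \<omega> * Y (u (Suc k)) \<omega> \<partial>M) - (\<integral>\<omega>. Y s \<omega> * Y (u k) \<omega> \<partial>M)" if "k < N" for k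
    using cov u that by (simp_all add: right_diff_distrib)
  moreover have "(\<integral>\<omega>. Y s \<omega> * (\<Sum>k<N. a k * (Y (u (Suc k)) \<omega> - Y (u k) \<omega>)) \<partial>M)
    = (\<integral>\<omega>. (\<Sum>k<N. a k * (Y s \<omega> * (Y (u (Suc k)) \<omega> - Y (u k) \<omega>))) \<partial>M)"
    by (simp add: sum_distrib_left mult_ac)
  ultimately show ?thesis by (subst (asm) Bochner_Integration.integral_sum) auto
qed

lemma covariance_increments_pvar_le:
  fixes Y :: "real \<Rightarrow> 'a \<Rightarrow> real" and u :: "nat \<Rightarrow> real"
  assumes "prob_space M" and G: "centered_gaussian_process M I Y" and p: "p > 1"
    and s: "s \<in> I" and u: "\<And>k. k \<le> N \<Longrightarrow> u k \<in> I" and R: "R \<ge> 0"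
    and likely: "measure M {\<omega>\<in>space M. (\<Sum>k<N. \<bar>Y (u (Suc k)) \<omega> - Y (u k) \<omega>\<bar> powr p) \<le> R} \<ge> 1/2"
  shows "(\<Sum>k<N. \<bar>(\<integral>\<omega>. Y s \<omega> * Y (u (Suc k)) \<omega> \<partial>M) - (\<integral>\<omega>. Y s \<omega> * Y (u k) \<omega> \<partial>M)\<bar> powr p)
         \<le> (((\<integral>\<omega>. (Y s \<omega>)\<^sup>2 \<partial>M) + 4 * (1 + R)\<^sup>2) / 2) powr p"
proof -
  interpret prob_space M by fact
  define D where "D k = (\<integral>\<omega>. Y s \<omega> * Y (u (Suc k)) \<omega> \<partial>M) - (\<integral>\<omega>. Y s \<omega> * Y (u k) \<omega> \<partial>M)" for k
  obtain a where dual: "(\<Sum>k<N. a k * D k) = (\<Sum>k<N. \<bar>D k\<bar> powr p) powr (1/p)"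
    and young: "\<And>x. \<bar>\<Sum>k<N. a k * x k\<bar> \<le> 1 + (\<Sum>k<N. \<bar>x k\<bar> powr p)"
    using lp_norm_dual_witness[OF p] by blast
  define Z where "Z \<omega> = (\<Sum>k<N. a k * (Y (u (Suc k)) \<omega> - Y (u k) \<omega>))" for \<omega>
  have Z: "centered_gaussian_rv M Z"
    unfolding Z_def using u by (intro centered_gaussian_process_increment_comb[OF G]) auto
  then have [measurable]: "Z \<in> borel_measurable M" by (simp add: centered_gaussian_rv_def)
  have "(\<integral>\<omega>. Y s \<omega> * Z \<omega> \<partial>M) = (\<Sum>k<N. a k * D k)"
    unfolding Z_def D_def by (rule covariance_increment_comb[OF G s u])
  then have "(\<Sum>k<N. \<bar>D k\<bar> powr p) powr (1/p) = (\<integral>\<omega>. Y s \<omega> * Z \<omega> \<partial>M)"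
    using dual by simp
  also have "\<dots> \<le> ((\<integral>\<omega>. (Y s \<omega>)\<^sup>2 \<partial>M) + (\<integral>\<omega>. (Z \<omega>)\<^sup>2 \<partial>M)) / 2"
    using centered_gaussian_process_rv[OF G s] centered_gaussian_rv_integrable_square[OF Z]
    by (intro integral_mult_le_half_squares) (auto simp: centered_gaussian_rv_def
        centered_gaussian_rv_integrable_square)
  also have "(\<integral>\<omega>. (Z \<omega>)\<^sup>2 \<partial>M) \<le> 4 * (1 + R)\<^sup>2"
  proof (rule centered_gaussian_rv_second_moment_le[OF Z])
    let ?small_increments = "{\<omega>\<in>space M. (\<Sum>k<N. \<bar>Y (u (Suc k)) \<omega> - Y (u k) \<omega>\<bar> powr p) \<le> R}"
    have "?small_increments \<subseteq> {\<omega>\<in>space M. \<bar>Z \<omega>\<bar> \<le> 1 + R}"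
    proof (intro subsetI, elim CollectE conjE, intro CollectI conjI)
      fix \<omega> assume "(\<Sum>k<N. \<bar>Y (u (Suc k)) \<omega> - Y (u k) \<omega>\<bar> powr p) \<le> R"
      then show "\<bar>Z \<omega>\<bar> \<le> 1 + R"
        using young[of "\<lambda>k. Y (u (Suc k)) \<omega> - Y (u k) \<omega>"] unfolding Z_def by linarith
    qed
    then have "measure M ?small_increments \<le> measure M {\<omega>\<in>space M. \<bar>Z \<omega>\<bar> \<le> 1 + R}"
      by (rule finite_measure_mono) measurable
    then show "measure M {\<omega>\<in>space M. \<bar>Z \<omega>\<bar> \<le> 1 + R} \<ge> 1/2" using likely by linarith
  qed (use R in simp)
  finally have "(\<Sum>k<N. \<bar>D k\<bar> powr p) powr (1/p) \<le> ((\<integral>\<omega>. (Y s \<omega>)\<^sup>2 \<partial>M) + 4 * (1 + R)\<^sup>2) / 2"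
    by simp
  then have "((\<Sum>k<N. \<bar>D k\<bar> powr p) powr (1/p)) powr p \<le> (((\<integral>\<omega>. (Y s \<omega>)\<^sup>2 \<partial>M) + 4 * (1 + R)\<^sup>2) / 2) powr p"
    using p by (intro powr_mono2) auto
  then show ?thesis using p by (simp add: powr_powr sum_nonneg D_def)
qed

lemma (in prob_space) AE_bounded_imp_prob_uniform_bound:
  fixes T :: "nat \<Rightarrow> 'a \<Rightarrow> real"
  assumes [measurable]: "\<And>n. T n \<in> borel_measurable M"
    and "AE \<omega> in M. bdd_above (range (\<lambda>n. T n \<omega>))" and "c < 1"
  obtains R where "R \<ge> 0" and "c \<le> prob {\<omega>\<in>space M. \<forall>n. T n \<omega> \<le> R}"
proof -
  define A where "A R = {\<omega>\<in>space M. \<forall>n. T n \<omega> \<le> real R}" for R :: nat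
  have A [measurable]: "A R \<in> events" for R unfolding A_def by measurable
  have "AE \<omega> in M. \<exists>R::nat. \<forall>n. T n \<omega> \<le> real R"
    using assms(2)
  proof eventually_elim
    case (elim \<omega>)
    then obtain K where "\<And>n. T n \<omega> \<le> K" by (auto simp: bdd_above_def)
    then show ?case using real_nat_ceiling_ge[of K] order_trans by blast
  qed
  then have "prob {\<omega>\<in>space M. \<exists>R::nat. \<forall>n. T n \<omega> \<le> real R} = 1"
    by (subst prob_Collect_eq_1) auto
  moreover have "(\<Union>R. A R) = {\<omega>\<in>space M. \<exists>R::nat. \<forall>n. T n \<omega> \<le> real R}"
    unfolding A_def by auto
  ultimately have "prob (\<Union>R. A R) = 1" by simp
  moreover have "(\<lambda>R. prob (A R)) \<longlonglongrightarrow> prob (\<Union>R. A R)"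
    by (rule finite_Lim_measure_incseq) (auto simp: incseq_def A_def intro: order_trans)
  ultimately have "eventually (\<lambda>R. prob (A R) > c) sequentially"
    using assms(3) by (auto intro: order_tendstoD)
  then obtain R where "prob (A R) > c" by (auto simp: eventually_sequentially)
  then show ?thesis by (intro that[of "real R"]) (auto simp: A_def)
qed

lemma badic_pvar_sum_one:
  "badic_pvar_sum b p f 1 n = (\<Sum>k<b ^ n. \<bar>f (real (Suc k) / real b ^ n) - f (real k / real b ^ n)\<bar> powr p)"
proof -
  have "nat \<lfloor>1 * real b ^ n\<rfloor> = b ^ n"
    by (simp flip: of_nat_power)
  then show ?thesis unfolding badic_pvar_sum_def by simp
qed

lemma badic_point_in_unit_interval:
  "k \<le> b ^ n \<Longrightarrow> 0 < b \<Longrightarrow> real k / real b ^ n \<in> {0..1}"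
  by (auto simp: divide_le_eq simp flip: of_nat_power)

lemma (in prob_space) limsup_covariance_badic_pvar_finite:
  fixes Y :: "real \<Rightarrow> 'a \<Rightarrow> real"
  assumes G: "centered_gaussian_process M {0..1} Y"
    and finite_pvar: "AE \<omega> in M. \<exists>v. has_badic_pvar b p (\<lambda>t. Y t \<omega>) 1 v"
    and p: "p > 1" and b: "b \<ge> 2" and s: "s \<in> {0..1}"
  shows "limsup (\<lambda>n. ereal (\<Sum>k<b ^ n.
            \<bar>(\<integral>\<omega>. Y s \<omega> * Y (real (Suc k) / real b ^ n) \<omega> \<partial>M)
             - (\<integral>\<omega>. Y s \<omega> * Y (real k / real b ^ n) \<omega> \<partial>M)\<bar> powr p)) < \<infinity>"
proof -
  define T where "T n \<omega> = badic_pvar_sum b p (\<lambda>t. Y t \<omega>) 1 n" for n \<omega>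
  have grid: "real k / real b ^ n \<in> {0..1}" if "k \<le> b ^ n" for k n
    using b that by (intro badic_point_in_unit_interval) auto
  have [measurable]: "Y t \<in> borel_measurable M" if "t \<in> {0..1}" for t
    using G that by (simp add: centered_gaussian_process_def)
  have "T n \<in> borel_measurable M" for n
    unfolding T_def badic_pvar_sum_one using grid by measurable
  moreover have "AE \<omega> in M. bdd_above (range (\<lambda>n. T n \<omega>))"
    using finite_pvar
  proof eventually_elim
    case (elim \<omega>)
    then have "Bseq (\<lambda>n. T n \<omega>)"
      unfolding T_def has_badic_pvar_def by (auto intro: convergent_imp_Bseq convergentI)
    then show ?case by (rule Bseq_bdd_above)
  qed
  ultimately obtain R where "R \<ge> 0" and R: "1/2 \<le> prob {\<omega>\<in>space M. \<forall>n. T n \<omega> \<le> R}"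
    using AE_bounded_imp_prob_uniform_bound[of T "1/2"] by auto
  have "(\<Sum>k<b ^ n. \<bar>(\<integral>\<omega>. Y s \<omega> * Y (real (Suc k) / real b ^ n) \<omega> \<partial>M)
             - (\<integral>\<omega>. Y s \<omega> * Y (real k / real b ^ n) \<omega> \<partial>M)\<bar> powr p)
        \<le> (((\<integral>\<omega>. (Y s \<omega>)\<^sup>2 \<partial>M) + 4 * (1 + R)\<^sup>2) / 2) powr p" for n
  proof (rule covariance_increments_pvar_le[OF prob_space_axioms G p s _ \<open>R \<ge> 0\<close>])
    have "prob {\<omega>\<in>space M. \<forall>n. T n \<omega> \<le> R} \<le> prob {\<omega>\<in>space M. T n \<omega> \<le> R}"
      using \<open>T n \<in> borel_measurable M\<close> by (intro finite_measure_mono) auto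
    then show "1/2 \<le> prob {\<omega>\<in>space M. (\<Sum>k<b ^ n. \<bar>Y (real (Suc k) / real b ^ n) \<omega>
        - Y (real k / real b ^ n) \<omega>\<bar> powr p) \<le> R}"
      using R unfolding T_def badic_pvar_sum_one by linarith
  qed (use grid in auto)
  then have "limsup (\<lambda>n. ereal (\<Sum>k<b ^ n.
            \<bar>(\<integral>\<omega>. Y s \<omega> * Y (real (Suc k) / real b ^ n) \<omega> \<partial>M)
             - (\<integral>\<omega>. Y s \<omega> * Y (real k / real b ^ n) \<omega> \<partial>M)\<bar> powr p))
        \<le> (((\<integral>\<omega>. (Y s \<omega>)\<^sup>2 \<partial>M) + 4 * (1 + R)\<^sup>2) / 2) powr p"
    by (intro Limsup_bounded always_eventually allI) simp
  then show ?thesis by (auto simp: order.strict_trans1)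
qed

section \<open>Digit series\<close>

lemma powr_diff_le_lipschitz:
  fixes p u v K :: real
  assumes "p \<ge> 1" and "0 \<le> u" "u \<le> v" "v \<le> K"
  shows "v powr p - u powr p \<le> p * K powr (p - 1) * (v - u)"
proof (cases "u = v")
  case False
  then have "u < v" using assms by simp
  have "continuous_on {u..v} (\<lambda>z. z powr p)"
    using assms by (intro continuous_on_powr' continuous_intros) auto
  moreover have "(\<lambda>z. z powr p) differentiable (at x)" if "u < x" for x
    using has_real_derivative_powr[of x p] that assms unfolding real_differentiable_def by auto
  ultimately obtain l z where z: "u < z" "z < v" and l: "DERIV (\<lambda>z. z powr p) z :> l"
    and mvt: "v powr p - u powr p = (v - u) * l"
    using MVT[OF \<open>u < v\<close>] by blast
  have "l = p * z powr (p - 1)"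
    using DERIV_unique[OF l has_real_derivative_powr[of z p]] z assms by simp
  have "z powr (p - 1) \<le> K powr (p - 1)"
    using z assms by (intro powr_mono2) auto
  then show ?thesis unfolding mvt \<open>l = p * z powr (p - 1)\<close> using \<open>u < v\<close> assms
    by (simp add: mult.commute mult_left_mono)
qed simp

lemma abs_powr_abs_diff_le:
  fixes p x y K :: real
  assumes "p \<ge> 1" and "\<bar>x\<bar> \<le> K" and "\<bar>y\<bar> \<le> K"
  shows "\<bar>\<bar>x\<bar> powr p - \<bar>y\<bar> powr p\<bar> \<le> p * K powr (p - 1) * \<bar>x - y\<bar>"
proof -
  have "\<bar>\<bar>x\<bar> - \<bar>y\<bar>\<bar> \<le> \<bar>x - y\<bar>" by simp
  moreover have "0 \<le> p * K powr (p - 1)" using assms by simp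
  moreover have "\<bar>\<bar>x\<bar> powr p - \<bar>y\<bar> powr p\<bar> \<le> p * K powr (p - 1) * \<bar>\<bar>x\<bar> - \<bar>y\<bar>\<bar>"
  proof (cases "\<bar>x\<bar> \<le> \<bar>y\<bar>")
    case True
    then show ?thesis
      using powr_diff_le_lipschitz[of p "\<bar>x\<bar>" "\<bar>y\<bar>" K] powr_mono2[of p "\<bar>x\<bar>" "\<bar>y\<bar>"] assms by auto
  next
    case False
    then show ?thesis
      using powr_diff_le_lipschitz[of p "\<bar>y\<bar>" "\<bar>x\<bar>" K] powr_mono2[of p "\<bar>y\<bar>" "\<bar>x\<bar>"] assms by auto
  qed
  ultimately show ?thesis using mult_left_mono order_trans by blast
qed

lemma sum_mod_periodic:
  fixes \<phi> :: "nat \<Rightarrow> real"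
  shows "(\<Sum>k<q * N. \<phi> (k mod N)) = real q * (\<Sum>r<N. \<phi> r)"
proof -
  have "(\<Sum>k<q * N. \<phi> (k mod N)) = (\<Sum>m<q. \<Sum>i\<in>{m * N..<m * N + N}. \<phi> (i mod N))"
    by (rule sum.nat_group[symmetric])
  also have "\<dots> = (\<Sum>m<q. \<Sum>r<N. \<phi> r)"
  proof (rule sum.cong[OF refl])
    fix m
    show "(\<Sum>i\<in>{m * N..<m * N + N}. \<phi> (i mod N)) = (\<Sum>r<N. \<phi> r)"
      using sum.shift_bounds_nat_ivl[of "\<lambda>i. \<phi> (i mod N)" 0 "m * N" N]
      by (simp add: add.commute atLeast0LessThan)
  qed
  finally show ?thesis by simp
qed

lemma sum_mod_periodic_approx:
  fixes \<phi> :: "nat \<Rightarrow> real"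
  assumes bound: "\<And>r. \<bar>\<phi> r\<bar> \<le> B" and "N > 0"
  shows "\<bar>(\<Sum>k<K. \<phi> (k mod N)) - real (K div N) * (\<Sum>r<N. \<phi> r)\<bar> \<le> real N * B"
proof -
  define q r where "q = K div N" and "r = K mod N"
  have "r < N" using \<open>N > 0\<close> unfolding r_def by simp
  have "(\<Sum>k<K. \<phi> (k mod N)) = (\<Sum>k<q * N. \<phi> (k mod N)) + (\<Sum>k\<in>{q * N..<q * N + r}. \<phi> (k mod N))"
    unfolding q_def r_def by (simp add: atLeast0LessThan[symmetric] sum.atLeastLessThan_concat)
  also have "(\<Sum>k\<in>{q * N..<q * N + r}. \<phi> (k mod N)) = (\<Sum>i<r. \<phi> i)"
    using sum.shift_bounds_nat_ivl[of "\<lambda>i. \<phi> (i mod N)" 0 "q * N" r] \<open>r < N\<close>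
    by (simp add: add.commute atLeast0LessThan)
  finally have "\<bar>(\<Sum>k<K. \<phi> (k mod N)) - real (K div N) * (\<Sum>r<N. \<phi> r)\<bar> = \<bar>\<Sum>i<r. \<phi> i\<bar>"
    unfolding sum_mod_periodic q_def by simp
  also have "\<dots> \<le> (\<Sum>i<r. \<bar>\<phi> i\<bar>)" by (rule sum_abs)
  also have "\<dots> \<le> real r * B"
    using sum_mono[of "{..<r}" "\<lambda>i. \<bar>\<phi> i\<bar>" "\<lambda>_. B"] bound by simp
  also have "\<dots> \<le> real N * B"
    using bound[of 0] \<open>r < N\<close> by (intro mult_right_mono) auto
  finally show ?thesis .
qed

lemma sum_power_tail_le:
  fixes \<beta> :: real
  assumes "0 \<le> \<beta>" "\<beta> < 1"
  shows "(\<Sum>j\<in>{J..<n}. \<beta> ^ j) \<le> \<beta> ^ J / (1 - \<beta>)"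
proof (cases "J \<le> n")
  case True
  have "(\<Sum>j\<in>{J..<n}. \<beta> ^ j) = \<beta> ^ J * (\<Sum>i<n - J. \<beta> ^ i)"
    using sum.shift_bounds_nat_ivl[of "\<lambda>j. \<beta> ^ j" 0 J "n - J"] True
    by (simp add: atLeast0LessThan power_add sum_distrib_left add.commute mult.commute)
  also have "\<dots> = \<beta> ^ J * ((1 - \<beta> ^ (n - J)) / (1 - \<beta>))"
    using assms by (simp add: sum_gp_strict)
  also have "\<dots> \<le> \<beta> ^ J * (1 / (1 - \<beta>))"
    using assms by (intro mult_left_mono divide_right_mono) auto
  finally show ?thesis by simp
qed (use assms in simp)

definition badic_digit :: "nat \<Rightarrow> nat \<Rightarrow> nat \<Rightarrow> nat" where
  "badic_digit b j k = k div b ^ j mod b"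

definition tent_slope :: "nat \<Rightarrow> real" where
  "tent_slope i = (if i = 0 then 1 else if i = 1 then -1 else 0)"

text \<open>Up to the factor \<open>b^(-(n-1)/p)\<close>, \<open>digit_series b \<beta> n k\<close> with \<open>\<beta> = b^(1/p - 1)\<close> is the
  increment of \<open>takagi b p\<close> over \<open>[k b^-n, (k + 1) b^-n]\<close> (\<open>takagi_badic_increment\<close>): its
  \<open>j\<close>-th term comes from the tents of level \<open>n - 1 - j\<close>, whose slope there, \<open>tent_slope\<close>, is
  determined by the \<open>j\<close>-th digit of \<open>k\<close>.\<close>
definition digit_series :: "nat \<Rightarrow> real \<Rightarrow> nat \<Rightarrow> nat \<Rightarrow> real" where
  "digit_series b \<beta> n k = (\<Sum>j<n. \<beta> ^ j * tent_slope (badic_digit b j k))"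

definition digit_series_block :: "nat \<Rightarrow> real \<Rightarrow> real \<Rightarrow> nat \<Rightarrow> real" where
  "digit_series_block b \<beta> p J = (\<Sum>r<b ^ J. \<bar>digit_series b \<beta> J r\<bar> powr p)"

definition digit_series_rate :: "nat \<Rightarrow> real \<Rightarrow> real \<Rightarrow> nat \<Rightarrow> real" where
  "digit_series_rate b \<beta> p J = real b * digit_series_block b \<beta> p J / real b ^ J"

lemma abs_tent_slope_le: "\<bar>tent_slope i\<bar> \<le> 1"
  by (simp add: tent_slope_def)

lemma abs_digit_series_tail_le:
  assumes "0 \<le> \<beta>" "\<beta> < 1"
  shows "\<bar>\<Sum>j\<in>{J..<n}. \<beta> ^ j * tent_slope (badic_digit b j k)\<bar> \<le> \<beta> ^ J / (1 - \<beta>)"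
proof -
  have "\<bar>\<Sum>j\<in>{J..<n}. \<beta> ^ j * tent_slope (badic_digit b j k)\<bar> \<le> (\<Sum>j\<in>{J..<n}. \<beta> ^ j)"
    using assms abs_tent_slope_le
    by (intro order_trans[OF sum_abs] sum_mono) (auto simp: abs_mult intro: mult_left_le)
  also have "\<dots> \<le> \<beta> ^ J / (1 - \<beta>)" by (rule sum_power_tail_le[OF assms])
  finally show ?thesis .
qed

lemma abs_digit_series_le:
  assumes "0 \<le> \<beta>" "\<beta> < 1"
  shows "\<bar>digit_series b \<beta> n k\<bar> \<le> 1 / (1 - \<beta>)"
  using abs_digit_series_tail_le[OF assms, where J=0 and n=n and b=b and k=k]
  by (simp add: digit_series_def atLeast0LessThan)

lemma abs_digit_series_diff_le:
  assumes "0 \<le> \<beta>" "\<beta> < 1" "J \<le> n"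
  shows "\<bar>digit_series b \<beta> n k - digit_series b \<beta> J k\<bar> \<le> \<beta> ^ J / (1 - \<beta>)"
proof -
  have "digit_series b \<beta> n k
      = digit_series b \<beta> J k + (\<Sum>j\<in>{J..<n}. \<beta> ^ j * tent_slope (badic_digit b j k))"
    unfolding digit_series_def using assms(3)
    by (simp add: atLeast0LessThan[symmetric] sum.atLeastLessThan_concat)
  then show ?thesis using abs_digit_series_tail_le[OF assms(1,2)] by simp
qed

lemma badic_digit_mod_power:
  assumes "j < J" "b > 0"
  shows "badic_digit b j (k mod b ^ J) = badic_digit b j k"
proof -
  have "b ^ J = b ^ j * b ^ (J - j)" using assms by (simp flip: power_add)
  then have "(k mod b ^ J) div b ^ j = k div b ^ j mod b ^ (J - j)"
    using assms by (simp add: mod_mult2_eq)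
  moreover have "k div b ^ j mod b ^ (J - j) mod b = k div b ^ j mod b"
    using assms by (intro mod_mod_cancel) simp
  ultimately show ?thesis unfolding badic_digit_def by simp
qed

lemma digit_series_mod_power:
  "b > 0 \<Longrightarrow> digit_series b \<beta> J (k mod b ^ J) = digit_series b \<beta> J k"
  unfolding digit_series_def by (intro sum.cong) (auto simp: badic_digit_mod_power)

lemma digit_series_Suc:
  assumes "b > 0"
  shows "digit_series b \<beta> (Suc n) k = tent_slope (badic_digit b 0 k) + \<beta> * digit_series b \<beta> n (k div b)"
  unfolding digit_series_def sum.lessThan_Suc_shift sum_distrib_left
  by (simp add: badic_digit_def div_mult2_eq mult.assoc)

lemma sum_digit_series_approx:
  assumes "b > 0" "0 \<le> \<beta>" "\<beta> < 1" "p \<ge> 1" "J \<le> n"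
  shows "\<bar>(\<Sum>k<K. \<bar>digit_series b \<beta> n k\<bar> powr p) - (\<Sum>k<K. \<bar>digit_series b \<beta> J (k mod b ^ J)\<bar> powr p)\<bar>
    \<le> real K * (p * (1 / (1 - \<beta>)) powr (p - 1) * (\<beta> ^ J / (1 - \<beta>)))"
proof -
  have "\<bar>\<bar>digit_series b \<beta> n k\<bar> powr p - \<bar>digit_series b \<beta> J (k mod b ^ J)\<bar> powr p\<bar>
      \<le> p * (1 / (1 - \<beta>)) powr (p - 1) * (\<beta> ^ J / (1 - \<beta>))" for k
  proof -
    have "\<bar>\<bar>digit_series b \<beta> n k\<bar> powr p - \<bar>digit_series b \<beta> J (k mod b ^ J)\<bar> powr p\<bar>
        \<le> p * (1 / (1 - \<beta>)) powr (p - 1) * \<bar>digit_series b \<beta> n k - digit_series b \<beta> J k\<bar>"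
      using abs_powr_abs_diff_le[OF assms(4) abs_digit_series_le abs_digit_series_le] assms
      by (simp add: digit_series_mod_power)
    also have "\<dots> \<le> p * (1 / (1 - \<beta>)) powr (p - 1) * (\<beta> ^ J / (1 - \<beta>))"
      using abs_digit_series_diff_le[OF assms(2,3,5)] assms by (intro mult_left_mono) auto
    finally show ?thesis .
  qed
  then have "(\<Sum>k<K. \<bar>\<bar>digit_series b \<beta> n k\<bar> powr p - \<bar>digit_series b \<beta> J (k mod b ^ J)\<bar> powr p\<bar>)
      \<le> (\<Sum>k<K. p * (1 / (1 - \<beta>)) powr (p - 1) * (\<beta> ^ J / (1 - \<beta>)))"
    by (rule sum_mono)
  moreover have "\<bar>(\<Sum>k<K. \<bar>digit_series b \<beta> n k\<bar> powr p) - (\<Sum>k<K. \<bar>digit_series b \<beta> J (k mod b ^ J)\<bar> powr p)\<bar>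
      \<le> (\<Sum>k<K. \<bar>\<bar>digit_series b \<beta> n k\<bar> powr p - \<bar>digit_series b \<beta> J (k mod b ^ J)\<bar> powr p\<bar>)"
    by (simp only: sum_subtractf[symmetric]) (rule sum_abs)
  ultimately show ?thesis by simp
qed

lemma sum_digit_series_approx_block:
  assumes "b > 0" "0 \<le> \<beta>" "\<beta> < 1" "p \<ge> 1" "J \<le> n"
  shows "\<bar>(\<Sum>k<K. \<bar>digit_series b \<beta> n k\<bar> powr p) - real (K div b ^ J) * digit_series_block b \<beta> p J\<bar>
    \<le> real K * (p * (1 / (1 - \<beta>)) powr (p - 1) * (\<beta> ^ J / (1 - \<beta>))) + real b ^ J * (1 / (1 - \<beta>)) powr p"
proof -
  have "\<bar>(\<Sum>k<K. \<bar>digit_series b \<beta> J (k mod b ^ J)\<bar> powr p) - real (K div b ^ J) * digit_series_block b \<beta> p J\<bar>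
      \<le> real (b ^ J) * (1 / (1 - \<beta>)) powr p"
    unfolding digit_series_block_def using assms abs_digit_series_le[OF assms(2,3)]
    by (intro sum_mod_periodic_approx) (auto intro: powr_mono2)
  then show ?thesis using sum_digit_series_approx[OF assms, of K] by simp
qed

lemma convergent_by_tail_bound:
  fixes a c :: "nat \<Rightarrow> real"
  assumes tail: "\<And>m n. n \<le> m \<Longrightarrow> \<bar>a m - a n\<bar> \<le> c n" and "c \<longlonglongrightarrow> 0"
  shows "convergent a"
proof -
  have "Cauchy a"
  proof (rule metric_CauchyI)
    fix \<epsilon> :: real assume "\<epsilon> > 0"
    then obtain N where "c N < \<epsilon> / 2"
      using order_tendstoD(2)[OF \<open>c \<longlonglongrightarrow> 0\<close>, of "\<epsilon> / 2"] by (auto simp: eventually_sequentially)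
    then have "dist (a m) (a n) < \<epsilon>" if "N \<le> m" "N \<le> n" for m n
      using tail[OF that(1)] tail[OF that(2)] by (simp add: dist_real_def)
    then show "\<exists>N. \<forall>m\<ge>N. \<forall>n\<ge>N. dist (a m) (a n) < \<epsilon>" by blast
  qed
  then show ?thesis by (simp add: Cauchy_convergent_iff)
qed

lemma digit_series_rate_convergent:
  assumes "b \<ge> 2" "0 \<le> \<beta>" "\<beta> < 1" "p \<ge> 1"
  shows "convergent (digit_series_rate b \<beta> p)"
proof (rule convergent_by_tail_bound)
  define c where "c = real b * (p * (1 / (1 - \<beta>)) powr (p - 1)) / (1 - \<beta>)"
  show "(\<lambda>J. c * \<beta> ^ J) \<longlonglongrightarrow> 0"
    using assms tendsto_mult_right_zero[OF LIMSEQ_power_zero, of \<beta> c] by simp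
  fix J J' :: nat assume "J \<le> J'"
  define q where "q = b ^ (J' - J)"
  define C where "C = p * (1 / (1 - \<beta>)) powr (p - 1) * (\<beta> ^ J / (1 - \<beta>))"
  have "b > 0" using assms(1) by simp
  have q: "b ^ J' = q * b ^ J"
    unfolding q_def using \<open>J \<le> J'\<close> by (simp flip: power_add)
  have "(\<Sum>k<b ^ J'. \<bar>digit_series b \<beta> J (k mod b ^ J)\<bar> powr p) = real q * digit_series_block b \<beta> p J"
    unfolding q(1) digit_series_block_def by (rule sum_mod_periodic)
  then have "\<bar>digit_series_block b \<beta> p J' - real q * digit_series_block b \<beta> p J\<bar> \<le> real b ^ J' * C"
    using sum_digit_series_approx[OF \<open>b > 0\<close> assms(2-4) \<open>J \<le> J'\<close>, of "b ^ J'"]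
    by (simp add: digit_series_block_def C_def)
  moreover have "digit_series_rate b \<beta> p J' - digit_series_rate b \<beta> p J
      = real b * (digit_series_block b \<beta> p J' - real q * digit_series_block b \<beta> p J) / real b ^ J'"
  proof -
    have "q > 0" unfolding q_def using \<open>b > 0\<close> by simp
    moreover have "real b ^ J' = real q * real b ^ J" using q(1) by (metis of_nat_mult of_nat_power)
    ultimately show ?thesis unfolding digit_series_rate_def using \<open>b > 0\<close> by (simp add: field_simps)
  qed
  ultimately have "\<bar>digit_series_rate b \<beta> p J' - digit_series_rate b \<beta> p J\<bar> \<le> real b * C"
    using \<open>b > 0\<close> by (simp add: abs_mult divide_le_eq mult_left_mono mult.commute)
  then show "\<bar>digit_series_rate b \<beta> p J' - digit_series_rate b \<beta> p J\<bar> \<le> c * \<beta> ^ J"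
    by (simp add: C_def c_def)
qed

lemma pair_abs_powr_ge_one:
  fixes y p :: real
  assumes "p \<ge> 0"
  shows "\<bar>1 + y\<bar> powr p + \<bar>-1 + y\<bar> powr p \<ge> 1"
proof -
  have "\<bar>1 + y\<bar> \<ge> 1 \<or> \<bar>-1 + y\<bar> \<ge> 1" by linarith
  then show ?thesis using assms ge_one_powr_ge_zero[of _ p]
    by (metis add_increasing add_increasing2 powr_ge_zero)
qed

lemma digit_series_block_Suc_ge:
  assumes "b \<ge> 2" "p \<ge> 0"
  shows "digit_series_block b \<beta> p (Suc n) \<ge> real b ^ n"
proof -
  define h where "h k = \<bar>digit_series b \<beta> (Suc n) k\<bar> powr p" for k
  have "b > 0" using assms(1) by simp
  have "1 \<le> (\<Sum>i\<in>{m * b..<m * b + b}. h i)" for m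
  proof -
    have "(1 + m * b) div b = m" "(1 + m * b) mod b = 1"
      using div_mult_self1[of b 1 m] mod_mult_self1[of 1 m b] assms(1) by auto
    then have "badic_digit b 0 (m * b) = 0" "(m * b) div b = m"
      "badic_digit b 0 (m * b + 1) = 1" "(m * b + 1) div b = m"
      using assms(1) by (simp_all add: badic_digit_def add.commute)
    then have "1 \<le> h (m * b) + h (m * b + 1)"
      unfolding h_def digit_series_Suc[OF \<open>b > 0\<close>]
      using pair_abs_powr_ge_one[OF assms(2)] by (simp add: tent_slope_def)
    also have "\<dots> \<le> (\<Sum>i\<in>{m * b..<m * b + b}. h i)"
      using assms(1) sum_mono2[of "{m * b..<m * b + b}" "{m * b, m * b + 1}" h]
      by (simp add: h_def)
    finally show ?thesis .
  qed
  then have "(\<Sum>m<b ^ n. 1) \<le> (\<Sum>m<b ^ n. \<Sum>i\<in>{m * b..<m * b + b}. h i)"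
    by (intro sum_mono)
  then have "real b ^ n \<le> (\<Sum>m<b ^ n. \<Sum>i\<in>{m * b..<m * b + b}. h i)" by simp
  also have "\<dots> = digit_series_block b \<beta> p (Suc n)"
    unfolding sum.nat_group digit_series_block_def h_def by (simp add: mult.commute)
  finally show ?thesis .
qed

lemma digit_series_rate_ge_one:
  assumes "b \<ge> 2" "p \<ge> 0" "J \<ge> 1"
  shows "digit_series_rate b \<beta> p J \<ge> 1"
proof -
  obtain n where n: "J = Suc n" using assms(3) by (cases J) auto
  have "real b * real b ^ n \<le> real b * digit_series_block b \<beta> p J"
    unfolding n using digit_series_block_Suc_ge[OF assms(1,2), where \<beta>=\<beta> and n=n] by (intro mult_left_mono) auto
  then show ?thesis using assms(1) by (simp add: digit_series_rate_def n field_simps)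
qed

lemma tendsto_nat_floor_div_power:
  assumes "b \<ge> 2" "t \<ge> 0" "m > 0"
  shows "(\<lambda>n. real (nat \<lfloor>t * real b ^ n\<rfloor> div m) / real b ^ n) \<longlonglongrightarrow> t / real m"
proof (rule tendsto_sandwich[OF always_eventually always_eventually])
  define K where "K n = nat \<lfloor>t * real b ^ n\<rfloor>" for n
  have b: "real b ^ n > 0" for n using assms(1) by simp
  have K: "t * real b ^ n - 1 \<le> real (K n)" "real (K n) \<le> t * real b ^ n" for n
    unfolding K_def using assms(2) b[of n] zero_le_mult_iff[of t "real b ^ n"] by linarith+
  have div: "real k / real m - 1 \<le> real (k div m)" "real (k div m) \<le> real k / real m" for k
  proof -
    have "k < (k div m + 1) * m" using assms(3) by (metis div_less_iff_less_mult less_add_one)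
    then have "real k < (real (k div m) + 1) * real m" by (metis of_nat_1 of_nat_add of_nat_less_iff of_nat_mult)
    then have "real k / real m < real (k div m) + 1" using assms(3) by (simp add: divide_less_eq)
    then show "real k / real m - 1 \<le> real (k div m)" by simp
  qed (rule of_nat_div_le_of_nat)
  show "\<forall>n. real (K n div m) / real b ^ n \<le> t / real m"
    using div(2) K(2) b assms(3) by (auto simp: divide_le_eq field_simps intro: order_trans)
  show "\<forall>n. t / real m - (1 / real m + 1) * (1 / real b ^ n) \<le> real (K n div m) / real b ^ n"
  proof
    fix n
    have "(t * real b ^ n - 1) / real m - 1 \<le> real (K n div m)"
      using div(1)[of "K n"] K(1)[of n] assms(3) by (smt (verit) divide_right_mono of_nat_0_le_iff)
    then have "((t * real b ^ n - 1) / real m - 1) / real b ^ n \<le> real (K n div m) / real b ^ n"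
      using b[of n] by (intro divide_right_mono) auto
    moreover have "((t * real b ^ n - 1) / real m - 1) / real b ^ n = t / real m - (1 / real m + 1) * (1 / real b ^ n)"
      using b[of n] assms(3) by (simp add: field_simps)
    ultimately show "t / real m - (1 / real m + 1) * (1 / real b ^ n) \<le> real (K n div m) / real b ^ n"
      by simp
  qed
  have "(\<lambda>n. (1 / real b) ^ n) \<longlonglongrightarrow> 0" using assms(1) by (intro LIMSEQ_power_zero) auto
  then have "(\<lambda>n. (1 / real m + 1) * (1 / real b) ^ n) \<longlonglongrightarrow> 0"
    by (rule tendsto_mult_right_zero)
  then have "(\<lambda>n. (1 / real m + 1) * (1 / real b ^ n)) \<longlonglongrightarrow> 0"
    by (simp add: power_one_over)
  from tendsto_diff[OF tendsto_const this]
  show "(\<lambda>n. t / real m - (1 / real m + 1) * (1 / real b ^ n)) \<longlonglongrightarrow> t / real m" by simp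
qed simp

lemma tendsto_by_approximating_family:
  fixes S :: "nat \<Rightarrow> real"
  assumes A: "\<And>J. (\<lambda>n. A J n) \<longlonglongrightarrow> a J" and "a \<longlonglongrightarrow> l"
    and close: "\<And>J. eventually (\<lambda>n. \<bar>S n - A J n\<bar> \<le> e J) sequentially" and "e \<longlonglongrightarrow> 0"
  shows "S \<longlonglongrightarrow> l"
proof (rule LIMSEQ_I)
  fix r :: real assume "r > 0"
  have "eventually (\<lambda>J. e J < r / 3) sequentially" "eventually (\<lambda>J. dist (a J) l < r / 3) sequentially"
    using order_tendstoD(2)[OF \<open>e \<longlonglongrightarrow> 0\<close>, of "r / 3"] tendstoD[OF \<open>a \<longlonglongrightarrow> l\<close>, of "r / 3"] \<open>r > 0\<close>
    by auto
  from eventually_conj[OF this] obtain J where J: "e J < r / 3" "\<bar>a J - l\<bar> < r / 3"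
    by (auto simp: eventually_sequentially dist_real_def)
  have "eventually (\<lambda>n. dist (A J n) (a J) < r / 3) sequentially"
    using tendstoD[OF A, of "r / 3" J] \<open>r > 0\<close> by simp
  with close[of J] have "eventually (\<lambda>n. norm (S n - l) < r) sequentially"
  proof eventually_elim
    case (elim n)
    then show ?case
      using J abs_triangle_ineq[of "S n - A J n" "A J n - a J"] abs_triangle_ineq[of "S n - a J" "a J - l"]
      by (simp add: dist_real_def)
  qed
  then show "\<exists>N. \<forall>n\<ge>N. norm (S n - l) < r" by (simp add: eventually_sequentially)
qed

lemma digit_series_pvar_sum_approx:
  assumes b: "b \<ge> 2" and \<beta>: "0 \<le> \<beta>" "\<beta> < 1" and p: "p \<ge> 1" and t: "t \<ge> 0"
    and n: "n \<ge> 1" "J \<le> n"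
  defines "K \<equiv> nat \<lfloor>t * real b ^ n\<rfloor>"
  shows "\<bar>(\<Sum>k<K. \<bar>digit_series b \<beta> n k\<bar> powr p) / real b ^ (n - 1)
           - real (K div b ^ J) * digit_series_block b \<beta> p J / real b ^ (n - 1)\<bar>
         \<le> t * real b * (p * (1 / (1 - \<beta>)) powr (p - 1) * (\<beta> ^ J / (1 - \<beta>)))
           + real b ^ Suc J * (1 / (1 - \<beta>)) powr p / real b ^ n"
proof -
  define C where "C = p * (1 / (1 - \<beta>)) powr (p - 1) * (\<beta> ^ J / (1 - \<beta>))"
  define E where "E = real b ^ J * (1 / (1 - \<beta>)) powr p"
  have "b > 0" using b by simp
  have bn: "real b ^ n = real b * real b ^ (n - 1)" using n by (cases n) auto
  have D: "real b ^ (n - 1) > 0" using b by simp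
  have "real K \<le> t * real b ^ n" unfolding K_def using t by simp
  then have "real K / real b ^ (n - 1) \<le> t * real b" using D by (simp add: divide_le_eq bn mult_ac)
  moreover have "C \<ge> 0" using \<beta> p by (simp add: C_def)
  ultimately have K: "real K / real b ^ (n - 1) * C \<le> t * real b * C" by (rule mult_right_mono)
  have "\<bar>(\<Sum>k<K. \<bar>digit_series b \<beta> n k\<bar> powr p) / real b ^ (n - 1)
           - real (K div b ^ J) * digit_series_block b \<beta> p J / real b ^ (n - 1)\<bar>
      = \<bar>(\<Sum>k<K. \<bar>digit_series b \<beta> n k\<bar> powr p) - real (K div b ^ J) * digit_series_block b \<beta> p J\<bar>
          / real b ^ (n - 1)"
    using D by (simp flip: diff_divide_distrib)
  also have "\<dots> \<le> (real K * C + E) / real b ^ (n - 1)"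
    using sum_digit_series_approx_block[OF \<open>b > 0\<close> \<beta> p n(2), of K] D
    unfolding C_def E_def by (intro divide_right_mono) auto
  also have "\<dots> = real K / real b ^ (n - 1) * C + E / real b ^ (n - 1)"
    by (simp add: add_divide_distrib)
  also have "E / real b ^ (n - 1) = real b ^ Suc J * (1 / (1 - \<beta>)) powr p / real b ^ n"
    using D \<open>b > 0\<close> by (simp add: E_def bn field_simps)
  finally show ?thesis using K by (simp add: C_def)
qed

lemma digit_series_pvar_limit:
  assumes b: "b \<ge> 2" and \<beta>: "0 \<le> \<beta>" "\<beta> < 1" and p: "p \<ge> 1" and t: "t \<ge> 0"
    and L: "digit_series_rate b \<beta> p \<longlonglongrightarrow> L"
  shows "(\<lambda>n. (\<Sum>k<nat \<lfloor>t * real b ^ n\<rfloor>. \<bar>digit_series b \<beta> n k\<bar> powr p) / real b ^ (n - 1)) \<longlonglongrightarrow> t * L"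
proof (rule tendsto_by_approximating_family)
  define K where "K n = nat \<lfloor>t * real b ^ n\<rfloor>" for n
  define C where "C = p * (1 / (1 - \<beta>)) powr (p - 1) * (1 / (1 - \<beta>))"
  show "(\<lambda>n. real (K n div b ^ J) * digit_series_block b \<beta> p J / real b ^ (n - 1))
      \<longlonglongrightarrow> t * digit_series_rate b \<beta> p J" for J
  proof (rule Lim_transform_eventually)
    have "(\<lambda>n. real b * digit_series_block b \<beta> p J * (real (K n div b ^ J) / real b ^ n))
        \<longlonglongrightarrow> real b * digit_series_block b \<beta> p J * (t / real (b ^ J))"
      unfolding K_def using b t by (intro tendsto_mult_left tendsto_nat_floor_div_power) auto
    then show "(\<lambda>n. real b * digit_series_block b \<beta> p J * (real (K n div b ^ J) / real b ^ n))
        \<longlonglongrightarrow> t * digit_series_rate b \<beta> p J"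
      by (simp add: digit_series_rate_def mult_ac)
    show "eventually (\<lambda>n. real b * digit_series_block b \<beta> p J * (real (K n div b ^ J) / real b ^ n)
        = real (K n div b ^ J) * digit_series_block b \<beta> p J / real b ^ (n - 1)) sequentially"
      using eventually_ge_at_top[of 1]
    proof eventually_elim
      case (elim n)
      then obtain m where "n = Suc m" by (cases n) auto
      then show ?case using b by simp
    qed
  qed
  show "(\<lambda>J. t * digit_series_rate b \<beta> p J) \<longlonglongrightarrow> t * L" using L by (rule tendsto_mult_left)
  show "(\<lambda>J. t * real b * C * \<beta> ^ J + inverse (real (Suc J))) \<longlonglongrightarrow> 0"
    using \<beta> by (intro tendsto_add_zero tendsto_mult_right_zero LIMSEQ_power_zero LIMSEQ_inverse_real_of_nat) auto
  fix J
  have "(\<lambda>n. real b ^ Suc J * (1 / (1 - \<beta>)) powr p * (1 / real b) ^ n) \<longlonglongrightarrow> 0"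
    using b by (intro tendsto_mult_right_zero LIMSEQ_power_zero) auto
  then have "eventually (\<lambda>n. real b ^ Suc J * (1 / (1 - \<beta>)) powr p * (1 / real b) ^ n
      < inverse (real (Suc J))) sequentially"
    by (rule order_tendstoD) simp
  with eventually_ge_at_top[of "max 1 J"]
  show "eventually (\<lambda>n. \<bar>(\<Sum>k<K n. \<bar>digit_series b \<beta> n k\<bar> powr p) / real b ^ (n - 1)
      - real (K n div b ^ J) * digit_series_block b \<beta> p J / real b ^ (n - 1)\<bar>
      \<le> t * real b * C * \<beta> ^ J + inverse (real (Suc J))) sequentially"
  proof eventually_elim
    case (elim n)
    then show ?case
      using digit_series_pvar_sum_approx[OF b \<beta> p t, of n J] unfolding K_def C_def
      by (simp add: power_one_over mult_ac)
  qed
qed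

section \<open>A Takagi-type function with linear \<open>p\<close>-th variation\<close>

definition tent :: "nat \<Rightarrow> real \<Rightarrow> real" where
  "tent b z = max 0 (1 - \<bar>real b * z - 1\<bar>)"

lemma tent_shape_step:
  fixes w w' B :: real and i :: nat
  assumes "B > 0" and "real i \<le> w" "w < real i + 1" and "w' = w + 1 / B" "w' \<le> real i + 1"
  shows "max 0 (1 - \<bar>w' - 1\<bar>) - max 0 (1 - \<bar>w - 1\<bar>) = tent_slope i / B"
proof -
  have "w \<le> w'" using assms by simp
  consider "i = 0" | "i = 1" | "i \<ge> 2" by linarith
  then show ?thesis
  proof cases
    case 1
    then have "max 0 (1 - \<bar>w' - 1\<bar>) = w'" "max 0 (1 - \<bar>w - 1\<bar>) = w"
      using assms \<open>w \<le> w'\<close> by auto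
    then show ?thesis using 1 assms by (simp add: tent_slope_def)
  next
    case 2
    then have "1 \<le> w" "w' \<le> 2" using assms by auto
    then have "max 0 (1 - \<bar>w' - 1\<bar>) = 2 - w'" "max 0 (1 - \<bar>w - 1\<bar>) = 2 - w"
      using \<open>w \<le> w'\<close> by (simp_all add: abs_if)
    then show ?thesis using 2 assms by (simp add: tent_slope_def)
  next
    case 3
    then have "2 \<le> w" using assms(2) by linarith
    then show ?thesis using 3 \<open>w \<le> w'\<close> by (simp add: tent_slope_def)
  qed
qed

lemma tent_increment:
  assumes "B > 0" "b > 0"
  shows "tent b (real (Suc \<rho>) / (real B * real b)) - tent b (real \<rho> / (real B * real b))
    = tent_slope (\<rho> div B) / real B"
proof -
  have B: "real B > 0" using assms by simp
  have "\<rho> div B * B \<le> \<rho>" "\<rho> < \<rho> div B * B + B" "Suc \<rho> \<le> \<rho> div B * B + B"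
    using div_mult_mod_eq[of \<rho> B] mod_less_divisor[OF \<open>B > 0\<close>, of \<rho>] by linarith+
  then have "real (\<rho> div B * B) \<le> real \<rho>" "real \<rho> < real (\<rho> div B * B + B)"
    "real (Suc \<rho>) \<le> real (\<rho> div B * B + B)"
    by (simp_all only: of_nat_le_iff of_nat_less_iff)
  then have "real (\<rho> div B) * real B \<le> real \<rho>" "real \<rho> < (real (\<rho> div B) + 1) * real B"
    "real (Suc \<rho>) \<le> (real (\<rho> div B) + 1) * real B"
    by (simp_all add: algebra_simps)
  then have "max 0 (1 - \<bar>real (Suc \<rho>) / real B - 1\<bar>) - max 0 (1 - \<bar>real \<rho> / real B - 1\<bar>)
      = tent_slope (\<rho> div B) / real B"
    using B by (intro tent_shape_step) (auto simp: field_simps)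
  then show ?thesis unfolding tent_def using assms by simp
qed

lemma frac_badic_point:
  assumes "b > 0"
  shows "frac (real k / real b ^ N) = real (k mod b ^ N) / real b ^ N"
proof (subst frac_unique_iff, intro conjI)
  have bN: "real b ^ N > 0" using assms by simp
  have "real k = real (k div b ^ N) * real b ^ N + real (k mod b ^ N)"
    by (metis div_mult_mod_eq of_nat_add of_nat_mult of_nat_power)
  then have "real k / real b ^ N - real (k mod b ^ N) / real b ^ N = real (k div b ^ N)"
    using bN by (simp add: field_simps)
  then show "real k / real b ^ N - real (k mod b ^ N) / real b ^ N \<in> \<int>" by simp
  have "real (k mod b ^ N) < real b ^ N"
    using assms by (metis mod_less_divisor of_nat_less_iff of_nat_power zero_less_power)
  then show "real (k mod b ^ N) / real b ^ N < 1" using bN by simp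
qed simp

lemma tent_frac_badic_increment:
  assumes "b \<ge> 2"
  shows "tent b (frac (real (Suc k) / real b ^ Suc N)) - tent b (frac (real k / real b ^ Suc N))
    = tent_slope (badic_digit b N k) / real b ^ N"
proof -
  define \<rho> where "\<rho> = k mod b ^ Suc N"
  have "b > 0" using assms by simp
  have wrap: "tent b (frac (real (Suc k) / real b ^ Suc N)) = tent b (real (Suc \<rho>) / real b ^ Suc N)"
  proof (cases "Suc \<rho> = b ^ Suc N")
    case True
    then have "Suc k mod b ^ Suc N = 0" by (simp add: \<rho>_def mod_Suc)
    then have z: "frac (real (Suc k) / real b ^ Suc N) = 0"
      using frac_badic_point[OF \<open>b > 0\<close>, of "Suc k" "Suc N"] by simp
    have one: "real (Suc \<rho>) / real b ^ Suc N = 1" using True \<open>b > 0\<close> by (metis of_nat_power divide_self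
      of_nat_eq_0_iff power_not_zero not_gr0)
    show ?thesis unfolding z one using assms by (simp add: tent_def)
  next
    case False
    then have "Suc k mod b ^ Suc N = Suc \<rho>" by (simp add: \<rho>_def mod_Suc)
    then show ?thesis using frac_badic_point[OF \<open>b > 0\<close>, of "Suc k" "Suc N"] by simp
  qed
  have digit: "\<rho> div b ^ N = badic_digit b N k"
    unfolding \<rho>_def badic_digit_def using \<open>b > 0\<close> by (simp add: mod_mult2_eq mult.commute[of b])
  have b: "real b ^ Suc N = real (b ^ N) * real b" by simp
  have "tent b (frac (real k / real b ^ Suc N)) = tent b (real \<rho> / (real (b ^ N) * real b))"
    using frac_badic_point[OF \<open>b > 0\<close>, of k "Suc N"] unfolding \<rho>_def b by simp
  moreover have "tent b (frac (real (Suc k) / real b ^ Suc N)) = tent b (real (Suc \<rho>) / (real (b ^ N) * real b))"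
    using wrap unfolding b .
  ultimately show ?thesis
    using tent_increment[of "b ^ N" b \<rho>] \<open>b > 0\<close> unfolding digit by simp
qed

text \<open>The summand \<open>1\<close> keeps the function \<open>\<ge> 1\<close>, so the covariances \<open>takagi b p s * takagi b p\<close>
  of the process below have positive variation rate.\<close>
definition takagi :: "nat \<Rightarrow> real \<Rightarrow> real \<Rightarrow> real" where
  "takagi b p x = 1 + (\<Sum>m. (real b powr (-1 / p)) ^ m * tent b (frac (real b ^ m * x)))"

lemma tent_nonneg_le_one: "0 \<le> tent b z \<and> tent b z \<le> 1"
  by (simp add: tent_def)

lemma takagi_summable:
  assumes "b \<ge> 2" "p > 0"
  shows "summable (\<lambda>m. (real b powr (-1 / p)) ^ m * tent b (frac (real b ^ m * x)))"
proof (rule summable_comparison_test'[where g="\<lambda>m. (real b powr (-1 / p)) ^ m" and N=0])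
  have "real b powr (-1 / p) < 1" using assms by (intro powr_less_one) auto
  then show "summable (\<lambda>m. (real b powr (-1 / p)) ^ m)" by (intro summable_geometric) simp
  show "norm ((real b powr (-1 / p)) ^ m * tent b (frac (real b ^ m * x))) \<le> (real b powr (-1 / p)) ^ m" for m
    using tent_nonneg_le_one[of b] by (simp add: abs_mult mult_left_le)
qed

lemma takagi_ge_one:
  assumes "b \<ge> 2" "p > 0"
  shows "takagi b p x \<ge> 1"
  using suminf_nonneg[OF takagi_summable[OF assms]] tent_nonneg_le_one[of b]
  by (simp add: takagi_def)

lemma takagi_badic_point:
  assumes "b \<ge> 2" "p > 0"
  shows "takagi b p (real k / real b ^ n)
    = 1 + (\<Sum>m<n. (real b powr (-1 / p)) ^ m * tent b (frac (real k / real b ^ (n - m))))"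
proof -
  have b: "real b > 0" using assms by simp
  have vanish: "(real b powr (-1 / p)) ^ m * tent b (frac (real b ^ m * (real k / real b ^ n))) = 0"
    if "m \<ge> n" for m
  proof -
    have "real b ^ m = real b ^ (m - n) * real b ^ n" using that by (simp flip: power_add)
    then have "real b ^ m * (real k / real b ^ n) = real (k * b ^ (m - n))" using b by simp
    then have "frac (real b ^ m * (real k / real b ^ n)) = 0" by (simp only: frac_eq_0_iff Ints_of_nat)
    then show ?thesis by (simp add: tent_def del: frac_eq_0_iff)
  qed
  have "(\<Sum>m. (real b powr (-1 / p)) ^ m * tent b (frac (real b ^ m * (real k / real b ^ n))))
      = (\<Sum>m<n. (real b powr (-1 / p)) ^ m * tent b (frac (real b ^ m * (real k / real b ^ n))))"
  proof (rule suminf_finite)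
    fix m assume "m \<notin> {..<n}"
    then show "(real b powr (-1 / p)) ^ m * tent b (frac (real b ^ m * (real k / real b ^ n))) = 0"
      by (intro vanish) simp
  qed simp
  also have "\<dots> = (\<Sum>m<n. (real b powr (-1 / p)) ^ m * tent b (frac (real k / real b ^ (n - m))))"
  proof (intro sum.cong refl)
    fix m assume "m \<in> {..<n}"
    then have "real b ^ n = real b ^ m * real b ^ (n - m)" by (simp flip: power_add)
    then show "(real b powr (-1 / p)) ^ m * tent b (frac (real b ^ m * (real k / real b ^ n)))
      = (real b powr (-1 / p)) ^ m * tent b (frac (real k / real b ^ (n - m)))"
      using b by simp
  qed
  finally show ?thesis unfolding takagi_def by simp
qed

lemma takagi_badic_increment:
  assumes b: "b \<ge> 2" and p: "p > 0"
  shows "takagi b p (real (Suc k) / real b ^ n) - takagi b p (real k / real b ^ n)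
    = (real b powr (-1 / p)) ^ (n - 1) * digit_series b (real b powr (1 / p - 1)) n k"
proof -
  define \<alpha> \<beta> where "\<alpha> = real b powr (-1 / p)" and "\<beta> = real b powr (1 / p - 1)"
  have "real b > 0" using b by simp
  have weights: "\<alpha> ^ (n - Suc j) / real b ^ j = \<alpha> ^ (n - 1) * \<beta> ^ j" if "j < n" for j
  proof -
    have "\<alpha> * \<beta> * real b = 1"
      using \<open>real b > 0\<close> by (simp add: \<alpha>_def \<beta>_def flip: powr_add powr_one_eq_one)
    then have "\<alpha> ^ j * \<beta> ^ j * real b ^ j = 1" by (metis power_mult_distrib power_one)
    moreover have "\<alpha> ^ (n - 1) = \<alpha> ^ (n - Suc j) * \<alpha> ^ j" using that by (simp flip: power_add)
    ultimately show ?thesis using \<open>real b > 0\<close> by (simp add: field_simps)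
  qed
  have "takagi b p (real (Suc k) / real b ^ n) - takagi b p (real k / real b ^ n)
      = (\<Sum>m<n. \<alpha> ^ m * (tent b (frac (real (Suc k) / real b ^ Suc (n - Suc m)))
          - tent b (frac (real k / real b ^ Suc (n - Suc m)))))"
    unfolding takagi_badic_point[OF b p] \<alpha>_def
    by (simp add: sum_subtractf[symmetric] right_diff_distrib Suc_diff_Suc)
  also have "\<dots> = (\<Sum>m<n. \<alpha> ^ m * (tent_slope (badic_digit b (n - Suc m) k) / real b ^ (n - Suc m)))"
    by (simp only: tent_frac_badic_increment[OF b])
  also have "\<dots> = (\<Sum>j<n. \<alpha> ^ (n - Suc j) / real b ^ j * tent_slope (badic_digit b j k))"
    by (subst sum.nat_diff_reindex[symmetric]) (simp add: Suc_diff_Suc)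
  also have "\<dots> = \<alpha> ^ (n - 1) * digit_series b \<beta> n k"
    unfolding digit_series_def sum_distrib_left by (intro sum.cong) (simp_all add: weights)
  finally show ?thesis by (simp add: \<alpha>_def \<beta>_def)
qed

lemma takagi_badic_pvar_sum:
  assumes b: "b \<ge> 2" and p: "p > 0" and "n \<ge> 1"
  shows "badic_pvar_sum b p (takagi b p) t n
    = (\<Sum>k<nat \<lfloor>t * real b ^ n\<rfloor>. \<bar>digit_series b (real b powr (1 / p - 1)) n k\<bar> powr p) / real b ^ (n - 1)"
proof -
  have "((real b powr (-1 / p)) ^ (n - 1)) powr p = real b powr (real (n - 1) * (-1 / p) * p)"
    using b by (simp add: powr_power powr_powr)
  also have "real (n - 1) * (-1 / p) * p = - real (n - 1)" using p by simp
  also have "real b powr (- real (n - 1)) = 1 / real b ^ (n - 1)"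
    using b by (simp add: powr_minus powr_realpow divide_inverse)
  finally have "((real b powr (-1 / p)) ^ (n - 1)) powr p = 1 / real b ^ (n - 1)" .
  then show ?thesis
    unfolding badic_pvar_sum_def takagi_badic_increment[OF b p]
    by (simp add: abs_mult powr_mult sum_divide_distrib)
qed

lemma takagi_has_badic_pvar:
  assumes b: "b \<ge> 2" and p: "p > 1"
  obtains L where "L \<ge> 1" and "\<And>t. t \<ge> 0 \<Longrightarrow> has_badic_pvar b p (takagi b p) t (t * L)"
proof -
  define \<beta> where "\<beta> = real b powr (1 / p - 1)"
  have \<beta>: "0 \<le> \<beta>" "\<beta> < 1" unfolding \<beta>_def using b p by (auto intro!: powr_less_one)
  obtain L where L: "digit_series_rate b \<beta> p \<longlonglongrightarrow> L"
    using digit_series_rate_convergent[OF b \<beta>, of p] p by (auto simp: convergent_def)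
  have "L \<ge> 1"
    using digit_series_rate_ge_one[OF b] p
    by (intro LIMSEQ_le_const[OF L]) (auto intro!: exI[of _ 1])
  moreover have "has_badic_pvar b p (takagi b p) t (t * L)" if "t \<ge> 0" for t
    unfolding has_badic_pvar_def
  proof (rule Lim_transform_eventually)
    show "(\<lambda>n. (\<Sum>k<nat \<lfloor>t * real b ^ n\<rfloor>. \<bar>digit_series b \<beta> n k\<bar> powr p) / real b ^ (n - 1)) \<longlonglongrightarrow> t * L"
      using digit_series_pvar_limit[OF b \<beta> _ that L] p by simp
    show "eventually (\<lambda>n. (\<Sum>k<nat \<lfloor>t * real b ^ n\<rfloor>. \<bar>digit_series b \<beta> n k\<bar> powr p) / real b ^ (n - 1)
        = badic_pvar_sum b p (takagi b p) t n) sequentially"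
      using eventually_ge_at_top[of 1]
      by eventually_elim (use b p in \<open>simp add: takagi_badic_pvar_sum \<beta>_def\<close>)
  qed
  ultimately show ?thesis using that by blast
qed

section \<open>A Gaussian process with linear \<open>p\<close>-th variation\<close>

lemma badic_pvar_sum_scale:
  "badic_pvar_sum b p (\<lambda>x. c * f x) t n = \<bar>c\<bar> powr p * badic_pvar_sum b p f t n"
  unfolding badic_pvar_sum_def sum_distrib_left
  by (simp add: powr_mult abs_mult flip: right_diff_distrib)

lemma has_badic_pvar_scale:
  "has_badic_pvar b p f t v \<Longrightarrow> has_badic_pvar b p (\<lambda>x. c * f x) t (\<bar>c\<bar> powr p * v)"
  unfolding has_badic_pvar_def badic_pvar_sum_scale by (rule tendsto_mult_left)

text \<open>The law of the constant sequence \<open>(\<xi>, \<xi>, \<dots>)\<close> with \<open>\<xi>\<close> standard normal: the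
  sample space of the theorem is fixed to be \<open>nat \<Rightarrow> real\<close>.\<close>
definition constant_normal_sequence :: "(nat \<Rightarrow> real) measure" where
  "constant_normal_sequence =
     distr std_normal_distribution (\<Pi>\<^sub>M i\<in>UNIV. borel) (\<lambda>x (_::nat). x)"

lemma measurable_constant_sequence:
  "(\<lambda>x (_::nat). x) \<in> measurable std_normal_distribution (\<Pi>\<^sub>M i\<in>UNIV. (borel :: real measure))"
proof -
  have "(\<lambda>x (i::nat). (\<lambda>_ x. x) i x) \<in> measurable std_normal_distribution (\<Pi>\<^sub>M i\<in>UNIV. (borel :: real measure))"
    by (rule measurable_PiM_single') auto
  then show ?thesis by simp
qed

lemma prob_space_constant_normal_sequence: "prob_space constant_normal_sequence"
  unfolding constant_normal_sequence_def
  by (intro prob_space.prob_space_distr prob_space_normal_density measurable_constant_sequence) simp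

lemma distr_constant_normal_sequence_coordinate:
  assumes "g \<in> borel_measurable borel"
  shows "distr constant_normal_sequence borel (\<lambda>\<omega>. g (\<omega> 0)) = distr std_normal_distribution borel g"
proof -
  have "(\<lambda>\<omega>. g (\<omega> (0::nat))) \<in> borel_measurable (\<Pi>\<^sub>M i\<in>UNIV. (borel :: real measure))"
    using assms measurable_component_singleton[of 0 UNIV "\<lambda>_. borel"] by measurable
  then show ?thesis
    unfolding constant_normal_sequence_def
    by (simp add: distr_distr[OF _ measurable_constant_sequence] comp_def)
qed

lemma constant_normal_sequence_coordinate_measurable [measurable]:
  "(\<lambda>\<omega>. \<omega> (0::nat)) \<in> borel_measurable constant_normal_sequence"
  unfolding constant_normal_sequence_def measurable_distr_eq1
  by (rule measurable_component_singleton) simp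

lemma centered_gaussian_rv_constant_normal_sequence:
  "centered_gaussian_rv constant_normal_sequence (\<lambda>\<omega>. c * \<omega> 0)"
proof (cases "c = 0")
  case True
  then show ?thesis
    using prob_space.distr_const[OF prob_space_constant_normal_sequence, of 0 borel]
    by (auto simp: centered_gaussian_rv_def intro!: exI[of _ 0])
next
  case False
  interpret N: prob_space "std_normal_distribution"
    by (rule prob_space_normal_density) simp
  have "distributed std_normal_distribution lborel (\<lambda>x. x) std_normal_density"
    by (auto simp: distributed_def distr_id2)
  from N.normal_density_affine[OF this zero_less_one False, of 0]
  have "distr std_normal_distribution borel (\<lambda>x. c * x) = density lborel (normal_density 0 \<bar>c\<bar>)"
    by (simp add: distributed_def cong: distr_cong)
  then show ?thesis
    using False distr_constant_normal_sequence_coordinate[of "\<lambda>x. c * x"]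
    by (auto simp: centered_gaussian_rv_def intro!: exI[of _ "\<bar>c\<bar>"])
qed

lemma integral_constant_normal_sequence:
  fixes g :: "real \<Rightarrow> real"
  assumes "g \<in> borel_measurable borel"
  shows "(\<integral>\<omega>. g (\<omega> 0) \<partial>constant_normal_sequence) = (\<integral>x. g x \<partial>std_normal_distribution)"
proof -
  have g: "(\<lambda>\<omega>. g (\<omega> (0::nat))) \<in> borel_measurable (\<Pi>\<^sub>M i\<in>UNIV. (borel :: real measure))"
    using assms measurable_component_singleton[of 0 UNIV "\<lambda>_. borel"] by measurable
  show ?thesis
    unfolding constant_normal_sequence_def integral_distr[OF measurable_constant_sequence g] by simp
qed

lemma constant_normal_sequence_second_moment:
  "(\<integral>\<omega>. (\<omega> 0)\<^sup>2 \<partial>constant_normal_sequence) = 1"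
  using integral_std_normal_moment_even[of 1]
  by (simp add: integral_constant_normal_sequence[of "\<lambda>x. x\<^sup>2"] integral_density)

lemma AE_constant_normal_sequence_nonzero:
  "AE \<omega> in constant_normal_sequence. \<omega> 0 \<noteq> 0"
proof -
  have "{\<omega> \<in> space (\<Pi>\<^sub>M i\<in>UNIV. (borel :: real measure)). \<omega> (0::nat) \<noteq> 0} \<in> sets (\<Pi>\<^sub>M i\<in>UNIV. borel)"
    using measurable_component_singleton[of 0 UNIV "\<lambda>_. borel :: real measure"] by measurable
  moreover have "AE x in std_normal_distribution. x \<noteq> 0"
    by (subst AE_density) (auto intro: AE_lborel_singleton[THEN AE_mp])
  ultimately show ?thesis
    unfolding constant_normal_sequence_def by (subst AE_distr_iff[OF measurable_constant_sequence]) simp_all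
qed

lemma centered_gaussian_process_scaled_normal:
  "centered_gaussian_process constant_normal_sequence I (\<lambda>t \<omega>. \<omega> 0 * f t)"
  unfolding centered_gaussian_process_def
proof (intro conjI ballI allI impI)
  fix F :: "real set" and a :: "real \<Rightarrow> real"
  have comb: "(\<lambda>\<omega>. \<Sum>t\<in>F. a t * (\<omega> 0 * f t)) = (\<lambda>\<omega>. (\<Sum>t\<in>F. a t * f t) * \<omega> 0)"
    by (simp add: sum_distrib_left sum_distrib_right mult_ac)
  show "centered_gaussian_rv constant_normal_sequence (\<lambda>\<omega>. \<Sum>t\<in>F. a t * (\<omega> 0 * f t))"
    unfolding comb by (rule centered_gaussian_rv_constant_normal_sequence)
qed simp

lemma exists_gaussian_process_linear_badic_pvar:
  fixes p :: real and b :: nat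
  assumes "p > 1" and "b \<ge> 2"
  shows "\<exists>(M :: (nat \<Rightarrow> real) measure) Y V.
            prob_space M \<and> centered_gaussian_process M {0..1} Y \<and>
            V \<in> borel_measurable M \<and>
            (AE \<omega> in M. 0 < V \<omega> \<and>
               (\<forall>t\<in>{0..1}. has_badic_pvar b p (\<lambda>t. Y t \<omega>) t (V \<omega> * t))) \<and>
            (\<forall>s\<in>{0<..<1}. \<exists>C. 0 < C \<and>
               (\<forall>t\<in>{0..1}. has_badic_pvar b p (\<lambda>t. integral\<^sup>L M (\<lambda>\<omega>. Y s \<omega> * Y t \<omega>)) t (C * t)))"
proof -
  obtain L where "L \<ge> 1" and L: "\<And>t. t \<ge> 0 \<Longrightarrow> has_badic_pvar b p (takagi b p) t (t * L)"
    using takagi_has_badic_pvar[OF assms(2,1)] by blast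
  define Y where "Y t \<omega> = \<omega> 0 * takagi b p t" for t and \<omega> :: "nat \<Rightarrow> real"
  define V where "V \<omega> = \<bar>\<omega> 0\<bar> powr p * L" for \<omega> :: "nat \<Rightarrow> real"
  have paths: "AE \<omega> in constant_normal_sequence. 0 < V \<omega> \<and>
      (\<forall>t\<in>{0..1}. has_badic_pvar b p (\<lambda>t. Y t \<omega>) t (V \<omega> * t))"
    using AE_constant_normal_sequence_nonzero
  proof eventually_elim
    case (elim \<omega>)
    then show ?case
      using \<open>L \<ge> 1\<close> has_badic_pvar_scale[OF L, of _ "\<omega> 0"] by (auto simp: Y_def V_def mult_ac)
  qed
  have "\<exists>C. 0 < C \<and> (\<forall>t\<in>{0..1}. has_badic_pvar b p
      (\<lambda>t. \<integral>\<omega>. Y s \<omega> * Y t \<omega> \<partial>constant_normal_sequence) t (C * t))" for s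
  proof -
    have "(\<integral>\<omega>. Y s \<omega> * Y t \<omega> \<partial>constant_normal_sequence) = takagi b p s * takagi b p t" for t
    proof -
      have "(\<integral>\<omega>. Y s \<omega> * Y t \<omega> \<partial>constant_normal_sequence)
          = (\<integral>\<omega>. takagi b p s * takagi b p t * (\<omega> 0)\<^sup>2 \<partial>constant_normal_sequence)"
        by (simp add: Y_def power2_eq_square mult_ac)
      then show ?thesis by (simp add: constant_normal_sequence_second_moment)
    qed
    moreover have "\<bar>takagi b p s\<bar> powr p * L > 0"
      using takagi_ge_one[OF assms(2), of p s] assms(1) \<open>L \<ge> 1\<close> by simp
    ultimately show ?thesis
      using has_badic_pvar_scale[OF L, of _ "takagi b p s"] by (auto simp: mult_ac)
  qed
  moreover have "V \<in> borel_measurable constant_normal_sequence"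
    unfolding V_def by measurable
  ultimately show ?thesis
    using prob_space_constant_normal_sequence centered_gaussian_process_scaled_normal paths
    unfolding Y_def by blast
qed

theorem corollary2p7:
  fixes p :: real and b :: nat
  assumes "p > 1" and "b \<ge> 2"
  shows "(\<exists>(M :: (nat \<Rightarrow> real) measure) Y V.
            prob_space M \<and> centered_gaussian_process M {0..1} Y \<and>
            V \<in> borel_measurable M \<and>
            (AE \<omega> in M. 0 < V \<omega> \<and>
               (\<forall>t\<in>{0..1}. has_badic_pvar b p (\<lambda>t. Y t \<omega>) t (V \<omega> * t))) \<and>
            (\<forall>s\<in>{0<..<1}. \<exists>C. 0 < C \<and>
               (\<forall>t\<in>{0..1}. has_badic_pvar b p (\<lambda>t. integral\<^sup>L M (\<lambda>\<omega>. Y s \<omega> * Y t \<omega>)) t (C * t))))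
       \<and>
         (\<forall>(M :: 'a measure) Y.
            prob_space M \<and> centered_gaussian_process M {0..1} Y \<and>
            (AE \<omega> in M. \<exists>v. has_badic_pvar b p (\<lambda>t. Y t \<omega>) 1 v)
            \<longrightarrow> (\<forall>s\<in>{0..1}.
                  limsup (\<lambda>n. ereal (\<Sum>k<b ^ n.
                     \<bar>integral\<^sup>L M (\<lambda>\<omega>. Y s \<omega> * Y (real (Suc k) / real b ^ n) \<omega>)
                      - integral\<^sup>L M (\<lambda>\<omega>. Y s \<omega> * Y (real k / real b ^ n) \<omega>)\<bar> powr p)) < \<infinity>))"
  using exists_gaussian_process_linear_badic_pvar[OF assms]
    prob_space.limsup_covariance_badic_pvar_finite[OF _ _ _ assms]
  by blast

end
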